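(* Let $A \in\mathcal{L}_d(\mathcal{Q})$, $A \neq 0$, admit a decomposition \[ A=\sum_{i=1}^t u^{(i)}u^{(i)\top} \] with $u^{(i)}\in\mathbb{F}_2^N$, such that its aggregate assignment is zero: \[ \sum_{i=1}^t u^{(i)}_U=0 \qquad\text{for every }U\in\mathcal{U}_{n,d}. \] Then \[ \operatorname{rank}(A) \ge \binom{d+1}{\lfloor (d+1)/2\rfloor} . \]
   Context: All objects are over $\mathbb{F}_2$. Fix integers $n\ge1$ and $d\ge1$, let $\mathcal{U}_{n,d}:=\{S\subseteq\{0,1,\dots,n\}:1\le|S|\le d\}$ and $N:=|\mathcal{U}_{n,d}|$. Let $\mathcal{Q}$ be a system of quadratic equations over $\mathbb{F}_2$ with zero constant term in the variables $\{y_S:S\in\mathcal{U}_{n,d}\}$, each of the form $\sum_{S,T\in\mathcal{U}_{n,d}} c_{S,T}y_Sy_T+\sum_{R\in\mathcal{U}_{n,d}} b_Ry_R=0$. Define $\mathcal{L}_d(\mathcal{Q})\subseteq\mathbb{F}_2^{N\times N}$ as the set of matrices $A$ with rows and columns indexed by $\mathcal{U}_{n,d}$ satisfying (1) the equal-union constraints $A_{S,T}=A_{S',T'}$ whenever $S\cup T=S'\cup T'$, and (2) for every equation of $\mathcal{Q}$, the linear constraint $\sum_{S,T} c_{S,T}A_{S,T}+\sum_R b_RA_{R,R}=0$. The vectors $u^{(i)}$ are viewed as assignments $y_U\mapsto u^{(i)}_U$; their aggregate assignment is the coordinate-wise sum $\sum_i u^{(i)}$. *)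

theory Defs
  imports Main "HOL.Vector_Spaces" "HOL-Library.Z2" "HOL-Library.Function_Algebras"
begin

definition U_nd :: "nat \<Rightarrow> nat \<Rightarrow> nat set set" where
  "U_nd n d = {S. S \<subseteq> {0..n} \<and> 1 \<le> card S \<and> card S \<le> d}"

text \<open>A quadratic equation with zero constant term: coefficients c_{S,T} and b_R.\<close>
type_synonym quad_eq = "(nat set \<Rightarrow> nat set \<Rightarrow> bit) \<times> (nat set \<Rightarrow> bit)"

text \<open>Matrices with rows/columns indexed by U_{n,d} are functions that vanish outside U_{n,d}.\<close>
definition is_Umat :: "nat \<Rightarrow> nat \<Rightarrow> (nat set \<Rightarrow> nat set \<Rightarrow> bit) \<Rightarrow> bool" where
  "is_Umat n d A \<longleftrightarrow> (\<forall>S T. (S \<notin> U_nd n d \<or> T \<notin> U_nd n d) \<longrightarrow> A S T = 0)"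

definition L_d :: "nat \<Rightarrow> nat \<Rightarrow> quad_eq set \<Rightarrow> (nat set \<Rightarrow> nat set \<Rightarrow> bit) set" where
  "L_d n d Q = {A. is_Umat n d A
     \<and> (\<forall>S\<in>U_nd n d. \<forall>T\<in>U_nd n d. \<forall>S'\<in>U_nd n d. \<forall>T'\<in>U_nd n d.
          S \<union> T = S' \<union> T' \<longrightarrow> A S T = A S' T')
     \<and> (\<forall>(c, b)\<in>Q. (\<Sum>S\<in>U_nd n d. \<Sum>T\<in>U_nd n d. c S T * A S T)
                    + (\<Sum>R\<in>U_nd n d. b R * A R R) = 0)}"

text \<open>Rank over F_2 of a U-indexed matrix: dimension of the span of its columns
  (column vectors as functions U_{n,d} -> F_2, vanishing outside).\<close>
definition rank_F2 :: "nat \<Rightarrow> nat \<Rightarrow> (nat set \<Rightarrow> nat set \<Rightarrow> bit) \<Rightarrow> nat" where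
  "rank_F2 n d A = vector_space.dim (\<lambda>(c::bit) (v::nat set \<Rightarrow> bit). (\<lambda>r. c * v r))
      ((\<lambda>T. (\<lambda>S. if S \<in> U_nd n d then A S T else 0)) ` U_nd n d)"

end

theory Submission
  imports Defs "HOL.Binomial_Plus"
begin

text \<open>Over GF(2) every \<open>x\<^sup>2 = x\<close>, so the diagonal of \<open>A = \<Sum>\<^sub>i u\<^sub>i u\<^sub>i\<^sup>T\<close> is the aggregate
  assignment, which vanishes. Choose \<open>W = S\<^sub>1 \<union> T\<^sub>1\<close> of minimal size with \<open>A(S\<^sub>1, T\<^sub>1) = 1\<close>.
  By the equal-union constraints and minimality, \<open>A(S, T) = [S \<union> T = W]\<close> for all indices
  \<open>S, T \<subseteq> W\<close>. If \<open>|W| \<le> d\<close> then \<open>W\<close> is itself an index and \<open>A(W, W) = A(S\<^sub>1, T\<^sub>1) = 1\<close>,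
  contradicting the vanishing diagonal; so \<open>d < m = |W| \<le> 2d\<close>. The minor whose columns are
  the \<open>m div 2\<close>-subsets \<open>T\<close> of \<open>W\<close> and whose rows are their complements \<open>W - T\<close> is then an
  identity matrix, whence \<open>rank A \<ge> (m choose m div 2) \<ge> (d + 1 choose (d + 1) div 2)\<close>.\<close>

lemma sum_fun_apply: "sum f A x = (\<Sum>a\<in>A. f a x)"
  for f :: "'a \<Rightarrow> 'b \<Rightarrow> 'c::comm_monoid_add"
  by (induction A rule: infinite_finite_induct) auto

lemma vector_space_pointwise: "vector_space (\<lambda>(c::'f::field) (v::'a \<Rightarrow> 'f) r. c * v r)"
  by unfold_locales (simp_all add: fun_eq_iff ring_distribs mult.assoc)

lemma independent_if_unit_rows:
  fixes B :: "('a \<Rightarrow> 'f::field) set"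
  assumes unit_row: "\<And>v. v \<in> B \<Longrightarrow> \<exists>r. \<forall>w\<in>B. w r = (if w = v then 1 else 0)"
  shows "\<not> module.dependent (\<lambda>c v r. c * v r) B"
proof -
  interpret vector_space "\<lambda>(c::'f) (v::'a \<Rightarrow> 'f) r. c * v r"
    by (rule vector_space_pointwise)
  show ?thesis
    unfolding independent_explicit_module
  proof (intro allI impI)
    fix t c v
    assume t: "finite t" "t \<subseteq> B" and combination: "(\<Sum>w\<in>t. (\<lambda>r. c w * w r)) = 0" and "v \<in> t"
    obtain r where r: "\<forall>w\<in>B. w r = (if w = v then 1 else 0)"
      using unit_row \<open>v \<in> t\<close> t(2) by blast
    have "(\<Sum>w\<in>t. c w * w r) = (\<Sum>w\<in>t. (\<lambda>r. c w * w r)) r"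
      by (rule sum_fun_apply[symmetric])
    then have "0 = (\<Sum>w\<in>t. c w * w r)"
      using combination by simp
    also have "\<dots> = (\<Sum>w\<in>t. if w = v then c w else 0)"
    proof (rule sum.cong[OF refl])
      fix w assume "w \<in> t"
      then have "w r = (if w = v then 1 else 0)"
        using r t(2) by blast
      then show "c w * w r = (if w = v then c w else 0)"
        by simp
    qed
    also have "\<dots> = c v"
      using t(1) \<open>v \<in> t\<close> by simp
    finally show "c v = 0" by simp
  qed
qed

lemma card_le_dim_if_unit_minor:
  fixes col :: "'c \<Rightarrow> 'r \<Rightarrow> 'f::field" and row :: "'c \<Rightarrow> 'r"
  assumes "finite C" "F \<subseteq> C"
    and unit: "\<And>T T'. T \<in> F \<Longrightarrow> T' \<in> F \<Longrightarrow> col T' (row T) = (if T' = T then 1 else 0)"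
  shows "card F \<le> vector_space.dim (\<lambda>c v r. c * v r) (col ` C)"
proof -
  interpret vector_space "\<lambda>(c::'f) (v::'r \<Rightarrow> 'f) r. c * v r"
    by (rule vector_space_pointwise)
  have inj: "inj_on col F"
  proof (rule inj_onI)
    fix T T' assume "T \<in> F" "T' \<in> F" "col T = col T'"
    then have "col T' (row T) = 1"
      using unit[of T T] by simp
    then show "T = T'"
      using unit[OF \<open>T \<in> F\<close> \<open>T' \<in> F\<close>] by (simp split: if_splits)
  qed
  have "independent (col ` F)"
  proof (rule independent_if_unit_rows)
    fix v assume "v \<in> col ` F"
    then obtain T where "T \<in> F" "v = col T"
      by blast
    have "w (row T) = (if w = v then 1 else 0)" if "w \<in> col ` F" for w
    proof -
      obtain T' where "T' \<in> F" "w = col T'"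
        using \<open>w \<in> col ` F\<close> by blast
      moreover have "col T' = col T \<longleftrightarrow> T' = T"
        using inj_onD[OF inj] \<open>T \<in> F\<close> \<open>T' \<in> F\<close> by blast
      ultimately show ?thesis
        using unit[OF \<open>T \<in> F\<close>] \<open>v = col T\<close> by simp
    qed
    then show "\<exists>r. \<forall>w\<in>col ` F. w r = (if w = v then 1 else 0)"
      by blast
  qed
  moreover have "col ` F \<subseteq> col ` C"
    using \<open>F \<subseteq> C\<close> by blast
  ultimately obtain B where B: "col ` F \<subseteq> B" "B \<subseteq> col ` C" "independent B" "col ` C \<subseteq> span B"
    by (metis maximal_independent_subset_extend)
  have "card F = card (col ` F)"
    using inj by (simp add: card_image)
  also have "\<dots> \<le> card B"
    using B(1,2) \<open>finite C\<close> by (meson card_mono finite_imageI finite_subset)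
  also have "\<dots> = dim (col ` C)"
    by (rule basis_card_eq_dim[OF B(2) B(4) B(3)])
  finally show ?thesis .
qed

lemma central_binomial_mono:
  assumes "a \<le> b"
  shows "a choose (a div 2) \<le> b choose (b div 2)"
  using binomial_right_mono[OF assms, of "a div 2"] binomial_maximum[of b "a div 2"]
  by (rule le_trans)

lemma minimal_union_support:
  fixes A :: "'a set \<Rightarrow> 'a set \<Rightarrow> 'b::zero"
  assumes "S\<^sub>0 \<in> U" "T\<^sub>0 \<in> U" "A S\<^sub>0 T\<^sub>0 \<noteq> 0"
    and finite: "\<And>S. S \<in> U \<Longrightarrow> finite S"
    and union_invariant: "\<And>S T S' T'. S \<in> U \<Longrightarrow> T \<in> U \<Longrightarrow> S' \<in> U \<Longrightarrow> T' \<in> U \<Longrightarrow>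
      S \<union> T = S' \<union> T' \<Longrightarrow> A S T = A S' T'"
  obtains S\<^sub>1 T\<^sub>1 where "S\<^sub>1 \<in> U" "T\<^sub>1 \<in> U"
    and "\<And>S T. S \<in> U \<Longrightarrow> T \<in> U \<Longrightarrow> S \<subseteq> S\<^sub>1 \<union> T\<^sub>1 \<Longrightarrow> T \<subseteq> S\<^sub>1 \<union> T\<^sub>1 \<Longrightarrow>
      A S T \<noteq> 0 \<longleftrightarrow> S \<union> T = S\<^sub>1 \<union> T\<^sub>1"
proof -
  define support where "support W \<longleftrightarrow> (\<exists>S\<in>U. \<exists>T\<in>U. S \<union> T = W \<and> A S T \<noteq> 0)" for W
  obtain W where "support W" and least: "\<And>W'. support W' \<Longrightarrow> card W \<le> card W'"
    using ex_has_least_nat[of support "S\<^sub>0 \<union> T\<^sub>0" card] assms(1-3) unfolding support_def by blast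
  then obtain S\<^sub>1 T\<^sub>1 where S\<^sub>1T\<^sub>1: "S\<^sub>1 \<in> U" "T\<^sub>1 \<in> U" "S\<^sub>1 \<union> T\<^sub>1 = W" "A S\<^sub>1 T\<^sub>1 \<noteq> 0"
    unfolding support_def by blast
  have "A S T \<noteq> 0 \<longleftrightarrow> S \<union> T = W" if "S \<in> U" "T \<in> U" "S \<subseteq> W" "T \<subseteq> W" for S T
  proof
    assume "A S T \<noteq> 0"
    then have "card W \<le> card (S \<union> T)"
      using least that(1,2) unfolding support_def by blast
    moreover have "finite W"
      using S\<^sub>1T\<^sub>1 finite by blast
    ultimately show "S \<union> T = W"
      using that(3,4) by (meson Un_least card_seteq)
  next
    assume "S \<union> T = W"
    then show "A S T \<noteq> 0"
      using union_invariant[OF that(1,2) S\<^sub>1T\<^sub>1(1,2)] S\<^sub>1T\<^sub>1(3,4) by simp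
  qed
  with S\<^sub>1T\<^sub>1 that show ?thesis by blast
qed

lemma Diff_Un_eq_iff_eq:
  assumes "T \<subseteq> W" "T' \<subseteq> W" "finite T'" "card T = card T'"
  shows "(W - T) \<union> T' = W \<longleftrightarrow> T' = T"
proof
  assume "(W - T) \<union> T' = W"
  then have "T \<subseteq> T'"
    using assms(1) by blast
  then show "T' = T"
    using card_subset_eq[OF assms(3) _ assms(4)] by simp
qed (use assms(1) in blast)

lemma finite_if_in_U_nd: "S \<in> U_nd n d \<Longrightarrow> finite S"
  unfolding U_nd_def using finite_subset by blast

lemma L_d_union_invariant:
  assumes "A \<in> L_d n d Q" "S \<in> U_nd n d" "T \<in> U_nd n d" "S' \<in> U_nd n d" "T' \<in> U_nd n d"
    and "S \<union> T = S' \<union> T'"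
  shows "A S T = A S' T'"
  using assms unfolding L_d_def by blast

lemma L_d_nonzero_entry:
  assumes "A \<in> L_d n d Q" "A \<noteq> 0"
  obtains S T where "S \<in> U_nd n d" "T \<in> U_nd n d" "A S T \<noteq> 0"
proof -
  obtain S T where "A S T \<noteq> 0"
    using assms(2) by (metis ext zero_fun_apply)
  moreover have "is_Umat n d A"
    using assms(1) unfolding L_d_def by blast
  ultimately show ?thesis
    using that unfolding is_Umat_def by blast
qed

lemma sum_squares_bit: "(\<Sum>i\<in>I. f i * f i) = (\<Sum>i\<in>I. f i)"
  for f :: "'a \<Rightarrow> bit"
  by (rule sum.cong) simp_all

lemma central_binomial_le_rank_F2:
  fixes A :: "nat set \<Rightarrow> nat set \<Rightarrow> bit"
  assumes W: "W \<subseteq> {0..n}" "d < card W" "card W \<le> 2 * d"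
    and indicator: "\<And>S T. S \<in> U_nd n d \<Longrightarrow> T \<in> U_nd n d \<Longrightarrow> S \<subseteq> W \<Longrightarrow> T \<subseteq> W \<Longrightarrow>
      A S T \<noteq> 0 \<longleftrightarrow> S \<union> T = W"
  shows "card W choose (card W div 2) \<le> rank_F2 n d A"
proof -
  define m where "m = card W"
  define F where "F = {T. T \<subseteq> W \<and> card T = m div 2}"
  define col where "col T = (\<lambda>S. if S \<in> U_nd n d then A S T else 0)" for T
  have "finite W"
    using W(1) finite_subset by blast
  have in_U: "S \<in> U_nd n d" if "S \<subseteq> W" "1 \<le> card S" "card S \<le> d" for S
    using that W(1) unfolding U_nd_def by auto
  have F_in_U: "T \<in> U_nd n d" and complement_in_U: "W - T \<in> U_nd n d" if "T \<in> F" for T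
  proof -
    have "card (W - T) = m - m div 2"
      using that \<open>finite W\<close> card_Diff_subset[of T W] finite_subset unfolding F_def m_def by auto
    then show "W - T \<in> U_nd n d" "T \<in> U_nd n d"
      using that W(2,3) in_U[of "W - T"] in_U[of T] unfolding F_def m_def by auto
  qed
  have "card F \<le> vector_space.dim (\<lambda>c v r. c * v r) (col ` U_nd n d)"
  proof (rule card_le_dim_if_unit_minor[where row = "\<lambda>T. W - T"])
    show "finite (U_nd n d)"
      by (rule finite_subset[of _ "Pow {0..n}"]) (auto simp: U_nd_def)
    show "F \<subseteq> U_nd n d"
      using F_in_U by blast
    fix T T' assume "T \<in> F" "T' \<in> F"
    then have "A (W - T) T' \<noteq> 0 \<longleftrightarrow> T' = T"
      using indicator[OF complement_in_U F_in_U] Diff_Un_eq_iff_eq[of T W T'] \<open>finite W\<close>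
      unfolding F_def by (auto intro: finite_subset)
    then show "col T' (W - T) = (if T' = T then 1 else 0)"
      using complement_in_U[OF \<open>T \<in> F\<close>] unfolding col_def by auto
  qed
  moreover have "card F = m choose (m div 2)"
    using n_subsets[OF \<open>finite W\<close>] unfolding F_def m_def by simp
  ultimately show ?thesis
    unfolding rank_F2_def col_def m_def by simp
qed

theorem lemma3p10:
  fixes n d t :: nat
    and Q :: "quad_eq set"
    and A :: "nat set \<Rightarrow> nat set \<Rightarrow> bit"
    and u :: "nat \<Rightarrow> nat set \<Rightarrow> bit"
  assumes "n \<ge> 1" and "d \<ge> 1"
    and "finite Q"
    and "A \<in> L_d n d Q"
    and "A \<noteq> 0"
    and "\<forall>S\<in>U_nd n d. \<forall>T\<in>U_nd n d. A S T = (\<Sum>i\<in>{1..t}. u i S * u i T)"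
    and "\<forall>U\<in>U_nd n d. (\<Sum>i\<in>{1..t}. u i U) = 0"
  shows "rank_F2 n d A \<ge> (d + 1) choose ((d + 1) div 2)"
proof -
  have diagonal: "A S S = 0" if "S \<in> U_nd n d" for S
    using assms(6,7) that sum_squares_bit[of "\<lambda>i. u i S" "{1..t}"] by metis
  obtain S\<^sub>0 T\<^sub>0 where S\<^sub>0T\<^sub>0: "S\<^sub>0 \<in> U_nd n d" "T\<^sub>0 \<in> U_nd n d" "A S\<^sub>0 T\<^sub>0 \<noteq> 0"
    by (rule L_d_nonzero_entry[OF assms(4,5)])
  obtain S\<^sub>1 T\<^sub>1 where S\<^sub>1T\<^sub>1: "S\<^sub>1 \<in> U_nd n d" "T\<^sub>1 \<in> U_nd n d"
    and indicator: "\<And>S T. S \<in> U_nd n d \<Longrightarrow> T \<in> U_nd n d \<Longrightarrow> S \<subseteq> S\<^sub>1 \<union> T\<^sub>1 \<Longrightarrow>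
      T \<subseteq> S\<^sub>1 \<union> T\<^sub>1 \<Longrightarrow> A S T \<noteq> 0 \<longleftrightarrow> S \<union> T = S\<^sub>1 \<union> T\<^sub>1"
    by (rule minimal_union_support[where A = A, OF S\<^sub>0T\<^sub>0 finite_if_in_U_nd L_d_union_invariant[OF assms(4)]])
      (assumption | rule that)+
  define W where "W = S\<^sub>1 \<union> T\<^sub>1"
  have W: "W \<subseteq> {0..n}" "1 \<le> card W" "card W \<le> 2 * d"
    using S\<^sub>1T\<^sub>1(1,2) card_Un_le[of S\<^sub>1 T\<^sub>1] card_mono[of W S\<^sub>1] finite_subset[of W "{0..n}"]
    unfolding W_def U_nd_def by auto
  have "W \<notin> U_nd n d"
    using diagonal indicator[of W W] unfolding W_def by blast
  then have "d < card W"
    using W(1,2) unfolding U_nd_def by auto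
  then have "card W choose (card W div 2) \<le> rank_F2 n d A"
    using central_binomial_le_rank_F2[OF W(1) _ W(3)] indicator unfolding W_def by blast
  then show ?thesis
    using central_binomial_mono[of "d + 1" "card W"] \<open>d < card W\<close> by simp
qed

end
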